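(* Let $E\subset[0,1]$ with $[0,1]\setminus E$ finite. For each $n$ let $R_n$ be a random closed set with $R_n\subset\{0,\dots,n\}/n$ a.s., with i.i.d. copies $\{R_{n,j}\}_{j\in\mathbb N}$, and assume there is $c_0>0$ such that for every $G\in\mathcal G_0$ there is $C$ with $\max_{k/n\in G}\mathbb P(k/n\in R_n)\le Cn^{-c_0}$ for all $n$. Let $\{X_j\}$ be i.i.d., independent of all $R_{n,j}$, with $\mathbb P(|X_1|>x)=x^{-\alpha}L(x)$, $\alpha>0$, $L$ slowly varying, and $\mathbb P(X_1>x)/\mathbb P(|X_1|>x)\to\mathsf p\in(0,1]$; let $m_n$ be increasing positive integers with $m_n\to\infty$ and $a_n$ with $m_n\mathbb P(X_1>a_n)\to1$. Let $X_{1:m_n},\dots,X_{m_n:m_n}$ be the reordering of $X_1,\dots,X_{m_n}$ with $|X_{1:m_n}|\ge\dots\ge|X_{m_n:m_n}|$, $\sigma_n$ the permutation with $X_{\sigma_n(j)}=X_{j:m_n}$, $\hat R_{n,j}=R_{n,\sigma_n(j)}$ and $\hat J_{n,k}=\{j\le m_n: k/n\in\hat R_{n,j}\}$. Let $\gamma\in(0,c_0/\alpha)$, $\delta_n=n^{-\gamma}$ and $$Z_{n,\ell}(k)=\sum_{j\in\hat J_{n,k}\setminus[\ell]}X_{j:m_n}\mathbf 1\{|X_{j:m_n}|/a_n>\delta_n\}$$ (empty sum $=0$). Then $$\lim_{\ell\to\infty}\limsup_{n\to\infty}\mathbb P\Big(\frac1{a_n}\max_{k/n\in G}|Z_{n,\ell}(k)|>\epsilon\Big)=0\quad\text{for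 all }\epsilon>0,\ G\in\mathcal G_0.$$
   Context: $[\ell]=\{1,\dots,\ell\}$; $\mathcal G_0=\{(a,b):[a,b]\subset E\}$; the maximum is over $k\in\{0,\dots,n\}$ with $k/n\in G$. *)

theory Defs
  imports "HOL-Probability.Probability"
begin

text \<open>A subset R of the grid {0,...,n}/n is encoded by the set of integers k with k/n in R.\<close>
definition set_space :: "nat set measure" where
  "set_space = sigma UNIV (range (\<lambda>k. {A. k \<in> A}))"

definition slowly_varying :: "(real \<Rightarrow> real) \<Rightarrow> bool" where
  "slowly_varying L \<longleftrightarrow> (\<forall>\<^sub>F x in at_top. L x > 0) \<and>
     (\<forall>t>0. ((\<lambda>x. L (t * x) / L x) \<longlongrightarrow> 1) at_top)"

text \<open>The indices 1..m sorted so that |X_j| is non-increasing (stable: ties broken by index).\<close>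
definition order_list :: "(nat \<Rightarrow> 'a \<Rightarrow> real) \<Rightarrow> nat \<Rightarrow> 'a \<Rightarrow> nat list" where
  "order_list X m \<omega> = sort_key (\<lambda>j. - \<bar>X j \<omega>\<bar>) [1..<Suc m]"

text \<open>sigma_n(j): the index with X_{sigma_n(j)} = X_{j:m}, for 1 <= j <= m.\<close>
definition order_perm :: "(nat \<Rightarrow> 'a \<Rightarrow> real) \<Rightarrow> nat \<Rightarrow> 'a \<Rightarrow> nat \<Rightarrow> nat" where
  "order_perm X m \<omega> j = order_list X m \<omega> ! (j - 1)"

definition Zsum :: "(nat \<Rightarrow> 'a \<Rightarrow> real) \<Rightarrow> (nat \<Rightarrow> nat \<Rightarrow> 'a \<Rightarrow> nat set) \<Rightarrow> (nat \<Rightarrow> nat)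
    \<Rightarrow> (nat \<Rightarrow> real) \<Rightarrow> real \<Rightarrow> nat \<Rightarrow> nat \<Rightarrow> nat \<Rightarrow> 'a \<Rightarrow> real" where
  "Zsum X R m a \<gamma> n l k \<omega> =
    (let \<sigma> = order_perm X (m n) \<omega>;
         Jhat = {j \<in> {1..m n}. k \<in> R n (\<sigma> j) \<omega>}
     in \<Sum>j \<in> Jhat - {1..l}. X (\<sigma> j) \<omega> *
          (if \<bar>X (\<sigma> j) \<omega>\<bar> / a n > real n powr (-\<gamma>) then 1 else 0))"

end

theory Submission
  imports Defs "HOL-Real_Asymp.Real_Asymp"
begin

(*
  Let c = epsilon / r and delta_n = n powr (-gamma).  If at most l of the |X_i| exceed c a_n and,
  for every grid point k, fewer than r of the indices i with |X_i| > delta_n a_n have k in R_{n,i},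
  then after discarding the l largest observations every |Z_{n,l}(k)| is at most
  (r - 1) c a_n <= epsilon a_n.  By independence and a union bound over index sets, the first
  condition fails with probability at most (m_n P(|X| > c a_n))^(l+1) / (l+1)!, which Potter's
  bound P(|X| > c a_n) <= K c^(-beta) P(|X| > a_n) keeps below Lambda^(l+1) / (l+1)! uniformly in n;
  the second fails at a fixed k with probability at most
  (m_n P(|X| > delta_n a_n) P(k in R_n))^r = O(n^(-r (c0 - gamma beta))).  Taking beta > alpha with
  gamma beta < c0 and r (c0 - gamma beta) > 1, the union over the n + 1 grid points vanishes as
  n tends to infinity, and Lambda^(l+1) / (l+1)! tends to 0 as l does.
*)

section \<open>Order statistics\<close>

lemma order_list:
  shows length_order_list: "length (order_list X m \<omega>) = m"
    and set_order_list: "set (order_list X m \<omega>) = {1..m}"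
    and distinct_order_list: "distinct (order_list X m \<omega>)"
    and sorted_order_list: "sorted (map (\<lambda>j. - \<bar>X j \<omega>\<bar>) (order_list X m \<omega>))"
  unfolding order_list_def by (auto intro: sorted_sort_key)

lemma order_perm_mem: "j \<in> {1..m} \<Longrightarrow> order_perm X m \<omega> j \<in> {1..m}"
proof -
  assume "j \<in> {1..m}"
  then have "j - 1 < length (order_list X m \<omega>)"
    by (auto simp: length_order_list)
  then show ?thesis
    unfolding order_perm_def by (metis nth_mem set_order_list)
qed

lemma inj_on_order_perm: "inj_on (order_perm X m \<omega>) {1..m}"
  by (intro inj_onI)
    (auto simp: order_perm_def nth_eq_iff_index_eq distinct_order_list length_order_list)

lemma order_perm_abs_antimono:
  assumes "1 \<le> i" "i \<le> j" "j \<le> m"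
  shows "\<bar>X (order_perm X m \<omega> j) \<omega>\<bar> \<le> \<bar>X (order_perm X m \<omega> i) \<omega>\<bar>"
  using sorted_nth_mono[OF sorted_order_list[where X = X and m = m and \<omega> = \<omega>], of "i - 1" "j - 1"] assms
  by (simp add: order_perm_def length_order_list)

lemma abs_Zsum_le:
  fixes X :: "nat \<Rightarrow> 'a \<Rightarrow> real"
  assumes "0 < a n" "0 \<le> t"
    and large: "card {i \<in> {1..m n}. t < \<bar>X i \<omega>\<bar>} \<le> l"
    and marked: "card {i \<in> {1..m n}. real n powr - \<gamma> * a n < \<bar>X i \<omega>\<bar> \<and> k \<in> R n i \<omega>} \<le> r"
  shows "\<bar>Zsum X R m a \<gamma> n l k \<omega>\<bar> \<le> real r * t"
proof -
  define \<sigma> where "\<sigma> = order_perm X (m n) \<omega>"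
  define J where "J = {j \<in> {1..m n}. k \<in> R n (\<sigma> j) \<omega>} - {1..l}"
  define kept where "kept j \<longleftrightarrow> real n powr - \<gamma> < \<bar>X (\<sigma> j) \<omega>\<bar> / a n" for j
  have Z: "Zsum X R m a \<gamma> n l k \<omega> = (\<Sum>j\<in>J. X (\<sigma> j) \<omega> * (if kept j then 1 else 0))"
    unfolding Zsum_def Let_def J_def kept_def \<sigma>_def by simp
  have small: "\<bar>X (\<sigma> j) \<omega>\<bar> \<le> t" if "j \<in> J" for j
  proof (rule ccontr)
    assume "\<not> \<bar>X (\<sigma> j) \<omega>\<bar> \<le> t"
    moreover have j: "1 \<le> j" "j \<le> m n" "l < j"
      using that by (auto simp: J_def)
    ultimately have "\<sigma> ` {1..j} \<subseteq> {i \<in> {1..m n}. t < \<bar>X i \<omega>\<bar>}"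
      using order_perm_abs_antimono[of _ j "m n" X \<omega>] order_perm_mem[of _ "m n" X \<omega>]
      by (fastforce simp: \<sigma>_def)
    moreover have "inj_on \<sigma> {1..j}"
      using j unfolding \<sigma>_def by (intro inj_on_subset[OF inj_on_order_perm]) auto
    ultimately have "card {1..j} \<le> card {i \<in> {1..m n}. t < \<bar>X i \<omega>\<bar>}"
      by (intro card_inj_on_le) auto
    with large have "j \<le> l" by simp
    with j show False by simp
  qed
  have "card {j \<in> J. kept j} \<le> r"
  proof -
    have "inj_on \<sigma> {j \<in> J. kept j}"
      unfolding \<sigma>_def by (rule inj_on_subset[OF inj_on_order_perm]) (auto simp: J_def)
    moreover have "\<sigma> ` {j \<in> J. kept j}
        \<subseteq> {i \<in> {1..m n}. real n powr - \<gamma> * a n < \<bar>X i \<omega>\<bar> \<and> k \<in> R n i \<omega>}"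
      using order_perm_mem[of _ "m n" X \<omega>] \<open>0 < a n\<close>
      by (auto simp: \<sigma>_def J_def kept_def pos_less_divide_eq mult.commute)
    ultimately have "card {j \<in> J. kept j}
        \<le> card {i \<in> {1..m n}. real n powr - \<gamma> * a n < \<bar>X i \<omega>\<bar> \<and> k \<in> R n i \<omega>}"
      by (intro card_inj_on_le) auto
    with marked show ?thesis by linarith
  qed
  have "\<bar>Zsum X R m a \<gamma> n l k \<omega>\<bar> \<le> (\<Sum>j\<in>J. if kept j then t else 0)"
    unfolding Z by (rule order_trans[OF sum_abs sum_mono]) (use small in auto)
  also have "\<dots> = real (card {j \<in> J. kept j}) * t"
    by (simp add: sum.If_cases J_def Int_def)
  also have "\<dots> \<le> real r * t"
    using \<open>card {j \<in> J. kept j} \<le> r\<close> \<open>0 \<le> t\<close> by (intro mult_right_mono) auto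
  finally show ?thesis .
qed

section \<open>Many simultaneous exceedances\<close>

lemma Collect_card_ge_eq_Union_Inter:
  assumes "finite I" "1 \<le> q"
  shows "{\<omega> \<in> \<Omega>. q \<le> card {i \<in> I. P i \<omega>}}
    = (\<Union>S\<in>{S. S \<subseteq> I \<and> card S = q}. \<Inter>i\<in>S. {\<omega> \<in> \<Omega>. P i \<omega>})"
proof (intro equalityI subsetI)
  fix \<omega> assume "\<omega> \<in> {\<omega> \<in> \<Omega>. q \<le> card {i \<in> I. P i \<omega>}}"
  then obtain S where "S \<subseteq> {i \<in> I. P i \<omega>}" "card S = q" "\<omega> \<in> \<Omega>"
    by (auto elim: obtain_subset_with_card_n)
  then show "\<omega> \<in> (\<Union>S\<in>{S. S \<subseteq> I \<and> card S = q}. \<Inter>i\<in>S. {\<omega> \<in> \<Omega>. P i \<omega>})"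
    by auto
next
  fix \<omega> assume "\<omega> \<in> (\<Union>S\<in>{S. S \<subseteq> I \<and> card S = q}. \<Inter>i\<in>S. {\<omega> \<in> \<Omega>. P i \<omega>})"
  then obtain S where S: "S \<subseteq> I" "card S = q" "\<forall>i\<in>S. \<omega> \<in> \<Omega> \<and> P i \<omega>"
    by auto
  moreover have "S \<noteq> {}"
    using S(2) \<open>1 \<le> q\<close> by auto
  moreover have "card S \<le> card {i \<in> I. P i \<omega>}"
    using S \<open>finite I\<close> by (intro card_mono) auto
  ultimately show "\<omega> \<in> {\<omega> \<in> \<Omega>. q \<le> card {i \<in> I. P i \<omega>}}"
    by auto
qed

lemma (in prob_space) prob_card_ge_le:
  fixes P :: "'i \<Rightarrow> 'a \<Rightarrow> bool"
  assumes "finite I" "1 \<le> q" "0 \<le> \<pi>"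
    and events: "\<And>i. i \<in> I \<Longrightarrow> {\<omega> \<in> space M. P i \<omega>} \<in> events"
    and prob_Inter: "\<And>S. S \<subseteq> I \<Longrightarrow> card S = q \<Longrightarrow> prob (\<Inter>i\<in>S. {\<omega> \<in> space M. P i \<omega>}) \<le> \<pi> ^ q"
  shows "{\<omega> \<in> space M. q \<le> card {i \<in> I. P i \<omega>}} \<in> events"
    and "prob {\<omega> \<in> space M. q \<le> card {i \<in> I. P i \<omega>}} \<le> (real (card I) * \<pi>) ^ q / fact q"
proof -
  define \<S> where "\<S> = {S. S \<subseteq> I \<and> card S = q}"
  have fin: "finite \<S>"
    unfolding \<S>_def using \<open>finite I\<close> by auto
  have finite_nonempty: "S \<noteq> {}" "finite S" if "S \<in> \<S>" for S
    using that \<open>1 \<le> q\<close> \<open>finite I\<close> finite_subset by (fastforce simp: \<S>_def)+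
  note eq = Collect_card_ge_eq_Union_Inter[OF assms(1,2), where \<Omega> = "space M" and P = P, folded \<S>_def]
  have Inter_events: "(\<Inter>i\<in>S. {\<omega> \<in> space M. P i \<omega>}) \<in> events" if "S \<in> \<S>" for S
    using finite_nonempty[OF that] events that by (intro sets.finite_INT) (auto simp: \<S>_def)
  show "{\<omega> \<in> space M. q \<le> card {i \<in> I. P i \<omega>}} \<in> events"
    unfolding eq using fin Inter_events by (intro sets.finite_UN) auto
  have "prob {\<omega> \<in> space M. q \<le> card {i \<in> I. P i \<omega>}} \<le> (\<Sum>S\<in>\<S>. prob (\<Inter>i\<in>S. {\<omega> \<in> space M. P i \<omega>}))"
    unfolding eq using fin Inter_events by (intro finite_measure_subadditive_finite) auto
  also have "\<dots> \<le> real (card \<S>) * \<pi> ^ q"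
    using sum_mono[of \<S> _ "\<lambda>_. \<pi> ^ q"] prob_Inter by (force simp: \<S>_def)
  also have "\<dots> = real (card I choose q) * \<pi> ^ q"
    unfolding \<S>_def using n_subsets[OF \<open>finite I\<close>] by simp
  also have "\<dots> \<le> (real (card I) * \<pi>) ^ q / fact q"
  proof -
    have "real (card I choose q) * fact q \<le> real (card I) ^ q"
      using of_nat_mono[OF binomial_fact_pow[of "card I" q], where 'a = real] by simp
    then have "real (card I choose q) * fact q * \<pi> ^ q \<le> real (card I) ^ q * \<pi> ^ q"
      using \<open>0 \<le> \<pi>\<close> by (intro mult_right_mono) auto
    then show ?thesis
      by (simp add: pos_le_divide_eq power_mult_distrib mult_ac)
  qed
  finally show "prob {\<omega> \<in> space M. q \<le> card {i \<in> I. P i \<omega>}} \<le> (real (card I) * \<pi>) ^ q / fact q" .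
qed

lemma (in prob_space) prob_iid_Inter:
  assumes indep: "indep_vars (\<lambda>_. N) Y I"
    and ident: "\<And>i. i \<in> I \<Longrightarrow> distr M N (Y i) = distr M N (Y k)"
    and "k \<in> I" "B \<in> sets N" "S \<subseteq> I" "finite S" "S \<noteq> {}"
  shows "prob (\<Inter>i\<in>S. {\<omega> \<in> space M. Y i \<omega> \<in> B}) = prob {\<omega> \<in> space M. Y k \<omega> \<in> B} ^ card S"
proof -
  have meas: "Y i \<in> measurable M N" if "i \<in> I" for i
    using indep that by (auto simp: indep_vars_def)
  have preimage: "{\<omega> \<in> space M. Y i \<omega> \<in> B} = Y i -` B \<inter> space M" for i
    by auto
  have same: "prob {\<omega> \<in> space M. Y i \<omega> \<in> B} = prob {\<omega> \<in> space M. Y k \<omega> \<in> B}" if "i \<in> I" for i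
    using measure_distr[OF meas[OF that] \<open>B \<in> sets N\<close>] measure_distr[OF meas[OF \<open>k \<in> I\<close>] \<open>B \<in> sets N\<close>]
      ident[OF that] by (simp add: preimage)
  have "prob (\<Inter>i\<in>S. {\<omega> \<in> space M. Y i \<omega> \<in> B}) = (\<Prod>i\<in>S. prob {\<omega> \<in> space M. Y i \<omega> \<in> B})"
    using indep assms(5-7) \<open>B \<in> sets N\<close> unfolding indep_vars_def2 preimage
    by (intro indep_setsD) auto
  also have "\<dots> = (\<Prod>i\<in>S. prob {\<omega> \<in> space M. Y k \<omega> \<in> B})"
    using \<open>S \<subseteq> I\<close> same by (intro prod.cong) auto
  finally show ?thesis
    by simp
qed

section \<open>Potter bounds\<close>

lemma exists_power_of_two_between:
  fixes t :: real
  assumes "1 \<le> t"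
  shows "\<exists>i::nat. t \<le> 2 ^ i \<and> 2 ^ i < 2 * t"
proof -
  obtain n :: nat where "t < 2 ^ n"
    using real_arch_pow[of 2 t] by auto
  then have ex: "\<exists>i::nat. t \<le> 2 ^ i"
    by (auto intro: less_imp_le)
  define i where "i = (LEAST i::nat. t \<le> 2 ^ i)"
  have "t \<le> 2 ^ i"
    unfolding i_def by (rule LeastI_ex[OF ex])
  moreover have "2 ^ i < 2 * t"
  proof (cases i)
    case (Suc j)
    then have "\<not> t \<le> 2 ^ j"
      unfolding i_def by (metis Least_le Suc_n_not_le_n i_def)
    then show ?thesis
      using Suc by simp
  qed (use assms in simp)
  ultimately show ?thesis
    by blast
qed

lemma doubling_bound_of_regularly_varying:
  fixes G L :: "real \<Rightarrow> real"
  assumes L: "slowly_varying L"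
    and G: "\<And>x. 0 < x \<Longrightarrow> G x = x powr - \<alpha> * L x"
    and "\<alpha> < \<beta>"
  shows "\<forall>\<^sub>F x in at_top. 0 < G x \<and> G x \<le> 2 powr \<beta> * G (2 * x)"
proof -
  have "((\<lambda>x. 2 powr - \<alpha> * (L (2 * x) / L x)) \<longlongrightarrow> 2 powr - \<alpha> * 1) at_top"
    using L unfolding slowly_varying_def by (intro tendsto_intros) auto
  moreover have "2 powr - \<beta> < 2 powr - \<alpha> * 1"
    using \<open>\<alpha> < \<beta>\<close> by simp
  ultimately have "\<forall>\<^sub>F x in at_top. 2 powr - \<beta> < 2 powr - \<alpha> * (L (2 * x) / L x)"
    by (rule order_tendstoD)
  moreover have "\<forall>\<^sub>F x in at_top. 0 < L x"
    using L unfolding slowly_varying_def by auto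
  ultimately show ?thesis
    using eventually_gt_at_top[of 0]
  proof eventually_elim
    case (elim x)
    define \<rho> where "\<rho> = 2 powr - \<alpha> * (L (2 * x) / L x)"
    have "0 < G x"
      using elim G[of x] by simp
    moreover have "G (2 * x) = \<rho> * G x"
      using elim G[of x] G[of "2 * x"] by (simp add: \<rho>_def powr_mult field_simps)
    moreover have "2 powr - \<beta> < \<rho>"
      using elim(1) unfolding \<rho>_def .
    ultimately have "2 powr - \<beta> * G x \<le> G (2 * x)"
      by (simp add: mult_right_mono)
    have "G x = 2 powr \<beta> * (2 powr - \<beta> * G x)"
      by (simp add: powr_add[symmetric] mult.assoc[symmetric])
    also have "\<dots> \<le> 2 powr \<beta> * G (2 * x)"
      using \<open>2 powr - \<beta> * G x \<le> G (2 * x)\<close> by (rule mult_left_mono) simp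
    finally show ?case
      using \<open>0 < G x\<close> by simp
  qed
qed

lemma ratio_bound_of_doubling:
  fixes G :: "real \<Rightarrow> real"
  assumes "antimono G" "0 \<le> \<beta>" "0 < x0"
    and doubling: "\<And>y. x0 \<le> y \<Longrightarrow> 0 < G y \<and> G y \<le> 2 powr \<beta> * G (2 * y)"
    and "x0 \<le> y" "y \<le> x"
  shows "G y \<le> (2 * x / y) powr \<beta> * G x"
proof -
  have y: "0 < y"
    using assms by linarith
  have iterate: "G y \<le> (2 powr \<beta>) ^ i * G (2 ^ i * y)" for i :: nat
  proof (induction i)
    case (Suc i)
    have "y \<le> 2 ^ i * y"
      using y by simp
    then have "x0 \<le> 2 ^ i * y"
      using \<open>x0 \<le> y\<close> by linarith
    have "G y \<le> (2 powr \<beta>) ^ i * G (2 ^ i * y)"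
      by (rule Suc.IH)
    also have "\<dots> \<le> (2 powr \<beta>) ^ i * (2 powr \<beta> * G (2 * (2 ^ i * y)))"
      using doubling \<open>x0 \<le> 2 ^ i * y\<close> by (intro mult_left_mono) auto
    also have "\<dots> = (2 powr \<beta>) ^ Suc i * G (2 ^ Suc i * y)"
      by (simp add: mult_ac)
    finally show ?case .
  qed simp
  obtain i :: nat where i: "x / y \<le> 2 ^ i" "2 ^ i < 2 * (x / y)"
    using exists_power_of_two_between[of "x / y"] y \<open>y \<le> x\<close> by auto
  have "x \<le> 2 ^ i * y"
    using i(1) y by (simp add: divide_le_eq)
  then have "G (2 ^ i * y) \<le> G x"
    by (rule antimonoD[OF \<open>antimono G\<close>])
  then have "G y \<le> (2 powr \<beta>) ^ i * G x"
    using iterate[of i] by (meson mult_left_mono order_trans powr_ge_zero zero_le_power)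
  also have "\<dots> = (2 ^ i) powr \<beta> * G x"
    by (simp add: powr_power powr_realpow[symmetric] powr_powr mult.commute)
  also have "\<dots> \<le> (2 * x / y) powr \<beta> * G x"
    using i(2) \<open>0 \<le> \<beta>\<close> doubling[of x] assms(5,6)
    by (intro mult_right_mono powr_mono2) auto
  finally show ?thesis .
qed

lemma potter_bound_of_doubling:
  fixes G :: "real \<Rightarrow> real"
  assumes "antimono G" "\<And>x. G x \<le> 1" "0 \<le> \<beta>" "0 < x0"
    and doubling: "\<And>y. x0 \<le> y \<Longrightarrow> 0 < G y \<and> G y \<le> 2 powr \<beta> * G (2 * y)"
    and "x0 \<le> x" "0 < \<delta>" "\<delta> \<le> 1"
  shows "G (\<delta> * x) \<le> max 1 (1 / G x0) * 2 powr \<beta> * \<delta> powr - \<beta> * G x"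
proof -
  have "\<delta> * x \<le> x"
    using assms(4,6-8) by (intro mult_left_le_one_le) auto
  define y where "y = max (\<delta> * x) x0"
  have "G (\<delta> * x) \<le> max 1 (1 / G x0) * G y"
  proof (cases "x0 \<le> \<delta> * x")
    case True
    then show ?thesis
      using doubling[of "\<delta> * x"] by (simp add: y_def mult_le_cancel_right1)
  next
    case False
    then have "G (\<delta> * x) \<le> 1 / G x0 * G x0"
      using assms(2)[of "\<delta> * x"] doubling[of x0] by simp
    also have "\<dots> \<le> max 1 (1 / G x0) * G x0"
      using doubling[of x0] by (intro mult_right_mono) auto
    also have "\<dots> = max 1 (1 / G x0) * G y"
      using False by (simp add: y_def)
    finally show ?thesis .
  qed
  also have "\<dots> \<le> max 1 (1 / G x0) * ((2 * x / y) powr \<beta> * G x)"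
    using ratio_bound_of_doubling[OF \<open>antimono G\<close> \<open>0 \<le> \<beta>\<close> \<open>0 < x0\<close> doubling, of y x]
      \<open>\<delta> * x \<le> x\<close> \<open>x0 \<le> x\<close>
    by (intro mult_left_mono) (auto simp: y_def)
  also have "\<dots> \<le> max 1 (1 / G x0) * ((2 / \<delta>) powr \<beta> * G x)"
  proof -
    have "2 * x / y \<le> 2 / \<delta>"
      using assms(4,6,7) by (auto simp: y_def field_simps)
    then show ?thesis
      using assms(3,4,6,7) doubling[of x]
      by (intro mult_left_mono mult_right_mono powr_mono2) (auto simp: y_def)
  qed
  also have "\<dots> = max 1 (1 / G x0) * 2 powr \<beta> * \<delta> powr - \<beta> * G x"
    using \<open>0 < \<delta>\<close> by (simp add: powr_divide powr_minus_divide)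
  finally show ?thesis .
qed

lemma potter_bound:
  fixes G L :: "real \<Rightarrow> real"
  assumes "antimono G" "\<And>x. G x \<le> 1"
    and "slowly_varying L" "\<And>x. 0 < x \<Longrightarrow> G x = x powr - \<alpha> * L x"
    and "\<alpha> < \<beta>" "0 \<le> \<beta>"
  shows "\<exists>K x0. 0 < K \<and> 0 < x0 \<and>
    (\<forall>x \<ge> x0. \<forall>\<delta>. 0 < \<delta> \<and> \<delta> \<le> 1 \<longrightarrow> G (\<delta> * x) \<le> K * \<delta> powr - \<beta> * G x)"
proof -
  obtain x0 where "0 < x0" and doubling: "\<And>y. x0 \<le> y \<Longrightarrow> 0 < G y \<and> G y \<le> 2 powr \<beta> * G (2 * y)"
    using eventually_conj[OF doubling_bound_of_regularly_varying[OF assms(3-5)] eventually_gt_at_top[of 0]]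
    by (auto simp: eventually_at_top_linorder)
  then show ?thesis
    using potter_bound_of_doubling[OF assms(1,2,6) \<open>0 < x0\<close> doubling]
    by (intro exI[of _ "max 1 (1 / G x0) * 2 powr \<beta>"] exI[of _ x0]) auto
qed

lemma exists_exponent_and_multiplicity:
  fixes \<alpha> \<gamma> c0 :: real
  assumes "0 < \<alpha>" "0 < \<gamma>" "\<gamma> < c0 / \<alpha>"
  obtains \<beta> and r :: nat where "\<alpha> < \<beta>" "1 \<le> r" "1 < real r * (c0 - \<gamma> * \<beta>)"
proof -
  have "\<alpha> < c0 / \<gamma>"
    using assms by (simp add: field_simps)
  then obtain \<beta> where "\<alpha> < \<beta>" "\<gamma> * \<beta> < c0"
    using dense assms(2) by (metis mult.commute pos_less_divide_eq)
  moreover obtain r :: nat where r: "1 < real r * (c0 - \<gamma> * \<beta>)"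
    using ex_less_of_nat_mult[of "c0 - \<gamma> * \<beta>" 1] \<open>\<gamma> * \<beta> < c0\<close> by auto
  moreover have "1 \<le> r"
    using r by (cases r) auto
  ultimately show ?thesis
    using that by blast
qed

section \<open>The normalizing sequence\<close>

lemma filterlim_at_top_of_antimono_tendsto_0:
  fixes H :: "real \<Rightarrow> real" and a :: "nat \<Rightarrow> real"
  assumes "antimono H" "\<forall>\<^sub>F x in at_top. 0 < H x" "(\<lambda>n. H (a n)) \<longlonglongrightarrow> 0"
  shows "filterlim a at_top sequentially"
  unfolding filterlim_at_top
proof
  fix z
  obtain y where "z \<le> y" "0 < H y"
    using eventually_conj[OF assms(2) eventually_ge_at_top[of z]] eventually_happens by fastforce
  then have "\<forall>\<^sub>F n in sequentially. H (a n) < H y"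
    using assms(3) by (intro order_tendstoD) auto
  then show "\<forall>\<^sub>F n in sequentially. z \<le> a n"
  proof eventually_elim
    case (elim n)
    then have "\<not> a n \<le> y"
      using antimonoD[OF \<open>antimono H\<close>, of "a n" y] by linarith
    with \<open>z \<le> y\<close> show "z \<le> a n"
      by linarith
  qed
qed

lemma eventually_le_of_ratio_tendsto:
  fixes G H :: "real \<Rightarrow> real"
  assumes "((\<lambda>x. H x / G x) \<longlongrightarrow> p) at_top" "0 < p" "\<And>x. 0 \<le> G x"
  shows "\<forall>\<^sub>F x in at_top. 0 < H x \<and> G x \<le> 2 / p * H x"
proof -
  have "\<forall>\<^sub>F x in at_top. p / 2 < H x / G x"
    using assms(1,2) by (intro order_tendstoD) auto
  then show ?thesis
  proof eventually_elim
    case (elim x)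
    have "G x \<noteq> 0"
      using elim \<open>0 < p\<close> by auto
    with assms(3)[of x] have "0 < G x"
      by simp
    then have "p / 2 * G x < H x"
      using elim by (simp add: less_divide_eq)
    moreover have "0 < p / 2 * G x"
      using \<open>0 < G x\<close> \<open>0 < p\<close> by simp
    ultimately show ?case
      using \<open>0 < p\<close> by (auto simp: field_simps)
  qed
qed

lemma (in prob_space) normalizing_sequence:
  fixes Y :: "'a \<Rightarrow> real" and m :: "nat \<Rightarrow> nat" and a :: "nat \<Rightarrow> real"
  assumes "Y \<in> borel_measurable M" "0 < p"
    and balance: "((\<lambda>x. prob {\<omega> \<in> space M. Y \<omega> > x} / prob {\<omega> \<in> space M. \<bar>Y \<omega>\<bar> > x}) \<longlongrightarrow> p) at_top"
    and m: "filterlim m at_top sequentially"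
    and a: "(\<lambda>n. real (m n) * prob {\<omega> \<in> space M. Y \<omega> > a n}) \<longlonglongrightarrow> 1"
  shows "filterlim a at_top sequentially"
    and "\<forall>\<^sub>F n in sequentially. real (m n) * prob {\<omega> \<in> space M. \<bar>Y \<omega>\<bar> > a n} \<le> 4 / p"
proof -
  define H where "H x = prob {\<omega> \<in> space M. Y \<omega> > x}" for x
  define G where "G x = prob {\<omega> \<in> space M. \<bar>Y \<omega>\<bar> > x}" for x
  have balanced: "\<forall>\<^sub>F x in at_top. 0 < H x \<and> G x \<le> 2 / p * H x"
    using balance \<open>0 < p\<close> unfolding G_def H_def by (rule eventually_le_of_ratio_tendsto) simp
  have "filterlim (\<lambda>n. real (m n)) at_top sequentially"
    by (rule filterlim_compose[OF filterlim_real_sequentially m])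
  then have "(\<lambda>n. real (m n) * H (a n) / real (m n)) \<longlonglongrightarrow> 0"
    using a unfolding H_def by (intro tendsto_divide_0[OF _ filterlim_at_top_imp_at_infinity])
  moreover have "\<forall>\<^sub>F n in sequentially. 1 \<le> m n"
    using m by (simp add: filterlim_at_top)
  then have "\<forall>\<^sub>F n in sequentially. real (m n) * H (a n) / real (m n) = H (a n)"
    by eventually_elim simp
  ultimately have "(\<lambda>n. H (a n)) \<longlonglongrightarrow> 0"
    by (rule Lim_transform_eventually)
  moreover have "antimono H"
    unfolding H_def using \<open>Y \<in> borel_measurable M\<close>
    by (intro antimonoI finite_measure_mono) auto
  moreover have "\<forall>\<^sub>F x in at_top. 0 < H x"
    using balanced by eventually_elim simp
  ultimately show a_lim: "filterlim a at_top sequentially"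
    by (intro filterlim_at_top_of_antimono_tendsto_0[of H])
  have "\<forall>\<^sub>F n in sequentially. real (m n) * H (a n) < 2"
    using a unfolding H_def by (intro order_tendstoD) auto
  moreover have "\<forall>\<^sub>F n in sequentially. 0 < H (a n) \<and> G (a n) \<le> 2 / p * H (a n)"
    using balanced a_lim by (rule eventually_compose_filterlim)
  ultimately show "\<forall>\<^sub>F n in sequentially. real (m n) * prob {\<omega> \<in> space M. \<bar>Y \<omega>\<bar> > a n} \<le> 4 / p"
  proof eventually_elim
    case (elim n)
    have "real (m n) * G (a n) \<le> real (m n) * (2 / p * H (a n))"
      using elim(2) by (intro mult_left_mono) auto
    also have "\<dots> = 2 / p * (real (m n) * H (a n))"
      by simp
    also have "\<dots> \<le> 2 / p * 2"
      using elim(1) \<open>0 < p\<close> by (intro mult_left_mono) auto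
    finally show ?case
      by (simp add: G_def)
  qed
qed

lemma eventually_potter_scaled_le:
  fixes G :: "real \<Rightarrow> real" and a :: "nat \<Rightarrow> real" and m :: "nat \<Rightarrow> nat"
  assumes potter: "\<forall>x \<ge> x0. \<forall>\<delta>. 0 < \<delta> \<and> \<delta> \<le> 1 \<longrightarrow> G (\<delta> * x) \<le> K * \<delta> powr - \<beta> * G x"
    and "0 < x0" "0 \<le> K" "filterlim a at_top sequentially"
    and "\<forall>\<^sub>F n in sequentially. real (m n) * G (a n) \<le> B"
  shows "\<forall>\<^sub>F n in sequentially. 0 < a n \<and>
    (\<forall>\<delta>. 0 < \<delta> \<and> \<delta> \<le> 1 \<longrightarrow> real (m n) * G (\<delta> * a n) \<le> K * B * \<delta> powr - \<beta>)"
  using eventually_ge_at_top[of x0, THEN eventually_compose_filterlim, OF \<open>filterlim a at_top sequentially\<close>]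
    assms(5)
proof eventually_elim
  case (elim n)
  have "real (m n) * G (\<delta> * a n) \<le> K * B * \<delta> powr - \<beta>" if "0 < \<delta>" "\<delta> \<le> 1" for \<delta>
  proof -
    have "real (m n) * G (\<delta> * a n) \<le> real (m n) * (K * \<delta> powr - \<beta> * G (a n))"
      using potter elim(1) that by (intro mult_left_mono) auto
    also have "\<dots> = K * \<delta> powr - \<beta> * (real (m n) * G (a n))"
      by simp
    also have "\<dots> \<le> K * \<delta> powr - \<beta> * B"
      using elim(2) \<open>0 \<le> K\<close> by (intro mult_left_mono) auto
    finally show ?thesis
      by (simp add: mult_ac)
  qed
  with elim(1) \<open>0 < x0\<close> show ?case
    by auto
qed

lemma power_div_fact_Suc_tendsto_0:
  fixes x :: real
  shows "(\<lambda>l. x ^ Suc l / fact (Suc l)) \<longlonglongrightarrow> 0"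
  using LIMSEQ_Suc[OF summable_LIMSEQ_zero[OF summable_exp[of x]]] by (simp add: divide_inverse mult.commute)

lemma tendsto_linear_times_powr_0:
  assumes "1 < s"
  shows "(\<lambda>n. real (n + 1) * D * real n powr - s) \<longlonglongrightarrow> 0"
  using assms by real_asymp

lemma limsup_tendsto_0_of_eventually_le:
  fixes P :: "nat \<Rightarrow> nat \<Rightarrow> real"
  assumes "\<And>l. \<forall>\<^sub>F n in sequentially. P l n \<le> u l + v n"
    and "u \<longlonglongrightarrow> 0" "v \<longlonglongrightarrow> 0" "\<And>l n. 0 \<le> P l n"
  shows "(\<lambda>l. limsup (\<lambda>n. ereal (P l n))) \<longlonglongrightarrow> 0"
proof (rule tendsto_sandwich[of "\<lambda>_. 0" _ _ "\<lambda>l. ereal (u l)"])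
  have "limsup (\<lambda>n. ereal (P l n)) \<le> limsup (\<lambda>n. ereal (u l + v n))" for l
    using assms(1)[of l] by (intro Limsup_mono) (auto elim: eventually_mono)
  also have "limsup (\<lambda>n. ereal (u l + v n)) = ereal (u l)" for l
    using tendsto_add[OF tendsto_const \<open>v \<longlonglongrightarrow> 0\<close>, of "u l"]
    by (intro lim_imp_Limsup tendsto_ereal) auto
  finally show "\<forall>\<^sub>F l in sequentially. limsup (\<lambda>n. ereal (P l n)) \<le> ereal (u l)"
    by simp
  show "\<forall>\<^sub>F l in sequentially. 0 \<le> limsup (\<lambda>n. ereal (P l n))"
    using assms(4) by (intro always_eventually allI le_Limsup) auto
  show "(\<lambda>l. ereal (u l)) \<longlonglongrightarrow> 0"
    using tendsto_ereal[OF \<open>u \<longlonglongrightarrow> 0\<close>] by (simp add: zero_ereal_def)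
qed simp

section \<open>An i.i.d. sample with i.i.d. random marks\<close>

lemma Collect_mem_sets_set_space: "{A. k \<in> A} \<in> sets set_space"
  unfolding set_space_def by (subst sets_measure_of) auto

lemma Collect_abs_gt_sets_borel: "{x :: real. t < \<bar>x\<bar>} \<in> sets borel"
  by measurable

locale iid_marked_sample = prob_space +
  fixes X :: "nat \<Rightarrow> 'a \<Rightarrow> real" and R :: "nat \<Rightarrow> nat \<Rightarrow> 'a \<Rightarrow> nat set"
  assumes X_indep: "indep_vars (\<lambda>_. borel) X {1..}"
    and X_ident: "\<And>j. 1 \<le> j \<Longrightarrow> distr M borel (X j) = distr M borel (X 1)"
    and R_indep: "\<And>n. indep_vars (\<lambda>_. set_space) (R n) {1..}"
    and R_ident: "\<And>n j. 1 \<le> j \<Longrightarrow> distr M set_space (R n j) = distr M set_space (R n 1)"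
    and XR_indep: "indep_set
        (sigma_sets (space M) (\<Union>j\<in>{1..}. {X j -` A \<inter> space M | A. A \<in> sets borel}))
        (sigma_sets (space M) (\<Union>n. \<Union>j\<in>{1..}. {R n j -` A \<inter> space M | A. A \<in> sets set_space}))"
begin

definition tail :: "real \<Rightarrow> real" where
  "tail t = prob {\<omega> \<in> space M. t < \<bar>X 1 \<omega>\<bar>}"

definition mark_prob :: "nat \<Rightarrow> nat \<Rightarrow> real" where
  "mark_prob n k = prob {\<omega> \<in> space M. k \<in> R n 1 \<omega>}"

lemma tail_nonneg: "0 \<le> tail t"
  by (simp add: tail_def)

lemma mark_prob_nonneg: "0 \<le> mark_prob n k"
  by (simp add: mark_prob_def)

lemma X_measurable: "1 \<le> j \<Longrightarrow> X j \<in> borel_measurable M"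
  using X_indep by (auto simp: indep_vars_def)

lemma R_measurable: "1 \<le> j \<Longrightarrow> R n j \<in> measurable M set_space"
  using R_indep by (auto simp: indep_vars_def)

lemma antimono_tail: "antimono tail"
  unfolding tail_def using X_measurable[of 1] by (intro antimonoI finite_measure_mono) auto

lemma large_event: "1 \<le> i \<Longrightarrow> {\<omega> \<in> space M. t < \<bar>X i \<omega>\<bar>} \<in> events"
  using X_measurable[of i] by measurable

lemma mark_event: "1 \<le> i \<Longrightarrow> {\<omega> \<in> space M. k \<in> R n i \<omega>} \<in> events"
  using measurable_sets[OF R_measurable Collect_mem_sets_set_space, of i n k]
  by (simp add: vimage_def Int_def conj_commute)

lemma prob_Inter_large:
  assumes "S \<subseteq> {1..}" "finite S" "S \<noteq> {}"
  shows "prob (\<Inter>i\<in>S. {\<omega> \<in> space M. t < \<bar>X i \<omega>\<bar>}) = tail t ^ card S"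
proof -
  have "prob (\<Inter>i\<in>S. {\<omega> \<in> space M. X i \<omega> \<in> {x. t < \<bar>x\<bar>}})
      = prob {\<omega> \<in> space M. X 1 \<omega> \<in> {x. t < \<bar>x\<bar>}} ^ card S"
  proof (rule prob_iid_Inter[OF X_indep _ _ Collect_abs_gt_sets_borel assms])
    show "\<And>i. i \<in> {1..} \<Longrightarrow> distr M borel (X i) = distr M borel (X 1)"
      by (intro X_ident) simp
  qed simp
  then show ?thesis
    by (simp add: tail_def)
qed

lemma prob_Inter_marks:
  assumes "S \<subseteq> {1..}" "finite S" "S \<noteq> {}"
  shows "prob (\<Inter>i\<in>S. {\<omega> \<in> space M. k \<in> R n i \<omega>}) = mark_prob n k ^ card S"
proof -
  have "prob (\<Inter>i\<in>S. {\<omega> \<in> space M. R n i \<omega> \<in> {A. k \<in> A}})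
      = prob {\<omega> \<in> space M. R n 1 \<omega> \<in> {A. k \<in> A}} ^ card S"
  proof (rule prob_iid_Inter[OF R_indep _ _ Collect_mem_sets_set_space assms])
    show "\<And>i. i \<in> {1..} \<Longrightarrow> distr M set_space (R n i) = distr M set_space (R n 1)"
      by (intro R_ident) simp
  qed simp
  then show ?thesis
    by (simp add: mark_prob_def)
qed

lemma prob_Inter_large_marked:
  assumes S: "S \<subseteq> {1..}" "finite S" "S \<noteq> {}"
  shows "prob (\<Inter>i\<in>S. {\<omega> \<in> space M. t < \<bar>X i \<omega>\<bar> \<and> k \<in> R n i \<omega>}) = (tail t * mark_prob n k) ^ card S"
proof -
  let ?GX = "\<Union>j\<in>{1..}. {X j -` A \<inter> space M | A. A \<in> sets borel}"
  let ?GR = "\<Union>n. \<Union>j\<in>{1..}. {R n j -` A \<inter> space M | A. A \<in> sets set_space}"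
  have large: "(\<Inter>i\<in>S. {\<omega> \<in> space M. t < \<bar>X i \<omega>\<bar>}) \<in> sigma_sets (space M) ?GX"
  proof (rule sigma_sets_INTER[OF _ _ S(3)])
    fix i assume "i \<in> S"
    then have "X i -` {x. t < \<bar>x\<bar>} \<inter> space M \<in> ?GX"
      using S(1) \<open>i \<in> S\<close>
      by (intro UN_I[of i] CollectI exI[of _ "{x. t < \<bar>x\<bar>}"] conjI Collect_abs_gt_sets_borel) auto
    then show "{\<omega> \<in> space M. t < \<bar>X i \<omega>\<bar>} \<in> sigma_sets (space M) ?GX"
      by (auto simp: vimage_def Int_def conj_commute intro: sigma_sets.Basic)
  qed blast
  have marks: "(\<Inter>i\<in>S. {\<omega> \<in> space M. k \<in> R n i \<omega>}) \<in> sigma_sets (space M) ?GR"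
  proof (rule sigma_sets_INTER[OF _ _ S(3)])
    fix i assume "i \<in> S"
    then have "R n i -` {A. k \<in> A} \<inter> space M \<in> ?GR"
      using S(1) \<open>i \<in> S\<close>
      by (intro UN_I[of n] UN_I[of i] CollectI exI[of _ "{A. k \<in> A}"] conjI Collect_mem_sets_set_space) auto
    then show "{\<omega> \<in> space M. k \<in> R n i \<omega>} \<in> sigma_sets (space M) ?GR"
      by (auto simp: vimage_def Int_def conj_commute intro: sigma_sets.Basic)
  qed blast
  have "(\<Inter>i\<in>S. {\<omega> \<in> space M. t < \<bar>X i \<omega>\<bar> \<and> k \<in> R n i \<omega>})
      = (\<Inter>i\<in>S. {\<omega> \<in> space M. t < \<bar>X i \<omega>\<bar>}) \<inter> (\<Inter>i\<in>S. {\<omega> \<in> space M. k \<in> R n i \<omega>})"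
    using S(3) by auto
  also have "prob \<dots> = prob (\<Inter>i\<in>S. {\<omega> \<in> space M. t < \<bar>X i \<omega>\<bar>}) * prob (\<Inter>i\<in>S. {\<omega> \<in> space M. k \<in> R n i \<omega>})"
    by (rule indep_setD[OF XR_indep large marks])
  finally show ?thesis
    by (simp add: prob_Inter_large[OF S] prob_Inter_marks[OF S] power_mult_distrib)
qed

lemma prob_many_large_le:
  assumes "1 \<le> q"
  shows "{\<omega> \<in> space M. q \<le> card {i \<in> {1..m}. t < \<bar>X i \<omega>\<bar>}} \<in> events"
    and "prob {\<omega> \<in> space M. q \<le> card {i \<in> {1..m}. t < \<bar>X i \<omega>\<bar>}} \<le> (real m * tail t) ^ q / fact q"
proof -
  have events: "{\<omega> \<in> space M. t < \<bar>X i \<omega>\<bar>} \<in> events" if "i \<in> {1..m}" for i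
    using large_event that by simp
  have bound: "prob (\<Inter>i\<in>S. {\<omega> \<in> space M. t < \<bar>X i \<omega>\<bar>}) \<le> tail t ^ q"
    if "S \<subseteq> {1..m}" "card S = q" for S
  proof -
    have "S \<subseteq> {1..}" "finite S" "S \<noteq> {}"
      using that assms finite_subset[OF that(1)] by auto
    then show ?thesis
      using prob_Inter_large[of S] that(2) by simp
  qed
  show "{\<omega> \<in> space M. q \<le> card {i \<in> {1..m}. t < \<bar>X i \<omega>\<bar>}} \<in> events"
    by (rule prob_card_ge_le(1)[OF finite_atLeastAtMost[of 1 m] assms tail_nonneg events bound])
  show "prob {\<omega> \<in> space M. q \<le> card {i \<in> {1..m}. t < \<bar>X i \<omega>\<bar>}} \<le> (real m * tail t) ^ q / fact q"
    using prob_card_ge_le(2)[OF finite_atLeastAtMost[of 1 m] assms tail_nonneg events bound]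
    by (simp only: card_atLeastAtMost diff_Suc_1)
qed

lemma prob_many_large_marked_le:
  assumes "1 \<le> q"
  shows "{\<omega> \<in> space M. q \<le> card {i \<in> {1..m}. t < \<bar>X i \<omega>\<bar> \<and> k \<in> R n i \<omega>}} \<in> events"
    and "prob {\<omega> \<in> space M. q \<le> card {i \<in> {1..m}. t < \<bar>X i \<omega>\<bar> \<and> k \<in> R n i \<omega>}}
      \<le> (real m * (tail t * mark_prob n k)) ^ q / fact q"
proof -
  have events: "{\<omega> \<in> space M. t < \<bar>X i \<omega>\<bar> \<and> k \<in> R n i \<omega>} \<in> events" if "i \<in> {1..m}" for i
  proof -
    have "{\<omega> \<in> space M. t < \<bar>X i \<omega>\<bar> \<and> k \<in> R n i \<omega>}
        = {\<omega> \<in> space M. t < \<bar>X i \<omega>\<bar>} \<inter> {\<omega> \<in> space M. k \<in> R n i \<omega>}"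
      by blast
    then show ?thesis
      using large_event mark_event that by simp
  qed
  have bound: "prob (\<Inter>i\<in>S. {\<omega> \<in> space M. t < \<bar>X i \<omega>\<bar> \<and> k \<in> R n i \<omega>})
      \<le> (tail t * mark_prob n k) ^ q" if "S \<subseteq> {1..m}" "card S = q" for S
  proof -
    have "S \<subseteq> {1..}" "finite S" "S \<noteq> {}"
      using that assms finite_subset[OF that(1)] by auto
    then show ?thesis
      using prob_Inter_large_marked[of S] that(2) by simp
  qed
  have "0 \<le> tail t * mark_prob n k"
    using tail_nonneg mark_prob_nonneg by simp
  show "{\<omega> \<in> space M. q \<le> card {i \<in> {1..m}. t < \<bar>X i \<omega>\<bar> \<and> k \<in> R n i \<omega>}} \<in> events"
    by (rule prob_card_ge_le(1)[OF finite_atLeastAtMost[of 1 m] assms \<open>0 \<le> tail t * mark_prob n k\<close> events bound])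
  show "prob {\<omega> \<in> space M. q \<le> card {i \<in> {1..m}. t < \<bar>X i \<omega>\<bar> \<and> k \<in> R n i \<omega>}}
      \<le> (real m * (tail t * mark_prob n k)) ^ q / fact q"
    using prob_card_ge_le(2)[OF finite_atLeastAtMost[of 1 m] assms \<open>0 \<le> tail t * mark_prob n k\<close> events bound]
    by (simp only: card_atLeastAtMost diff_Suc_1)
qed

lemma prob_Max_abs_Zsum_gt_le:
  fixes m :: "nat \<Rightarrow> nat" and a :: "nat \<Rightarrow> real" and Q :: "nat \<Rightarrow> bool"
  assumes "0 < a n" "0 < c" "1 \<le> r" "(real r - 1) * c \<le> \<epsilon>" "finite {k. Q k}"
  shows "prob {\<omega> \<in> space M. Max ({\<bar>Zsum X R m a \<gamma> n l k \<omega>\<bar> | k. Q k} \<union> {0}) / a n > \<epsilon>}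
    \<le> (real (m n) * tail (c * a n)) ^ Suc l / fact (Suc l)
      + (\<Sum>k | Q k. (real (m n) * (tail (real n powr - \<gamma> * a n) * mark_prob n k)) ^ r / fact r)"
proof -
  define big where "big = {\<omega> \<in> space M. Suc l \<le> card {i \<in> {1..m n}. c * a n < \<bar>X i \<omega>\<bar>}}"
  define marked where "marked k = {\<omega> \<in> space M.
      r \<le> card {i \<in> {1..m n}. real n powr - \<gamma> * a n < \<bar>X i \<omega>\<bar> \<and> k \<in> R n i \<omega>}}" for k
  have marked_events: "marked k \<in> events" for k
    unfolding marked_def using prob_many_large_marked_le(1) \<open>1 \<le> r\<close> .
  have incl: "{\<omega> \<in> space M. Max ({\<bar>Zsum X R m a \<gamma> n l k \<omega>\<bar> | k. Q k} \<union> {0}) / a n > \<epsilon>}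
      \<subseteq> big \<union> (\<Union>k\<in>{k. Q k}. marked k)"
  proof (rule subsetI, rule ccontr)
    fix \<omega> assume \<omega>: "\<omega> \<in> {\<omega> \<in> space M. Max ({\<bar>Zsum X R m a \<gamma> n l k \<omega>\<bar> | k. Q k} \<union> {0}) / a n > \<epsilon>}"
      and "\<omega> \<notin> big \<union> (\<Union>k\<in>{k. Q k}. marked k)"
    then have "\<bar>Zsum X R m a \<gamma> n l k \<omega>\<bar> \<le> real (r - 1) * (c * a n)" if "Q k" for k
      using that \<open>0 < a n\<close> \<open>0 < c\<close> by (intro abs_Zsum_le) (auto simp: big_def marked_def)
    then have "Max ({\<bar>Zsum X R m a \<gamma> n l k \<omega>\<bar> | k. Q k} \<union> {0}) \<le> real (r - 1) * (c * a n)"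
      using \<open>finite {k. Q k}\<close> \<open>0 < a n\<close> \<open>0 < c\<close> by (subst Max_le_iff) auto
    then have "Max ({\<bar>Zsum X R m a \<gamma> n l k \<omega>\<bar> | k. Q k} \<union> {0}) / a n \<le> (real r - 1) * c"
      using \<open>0 < a n\<close> \<open>1 \<le> r\<close> by (simp add: pos_divide_le_eq of_nat_diff mult_ac)
    with \<omega> \<open>(real r - 1) * c \<le> \<epsilon>\<close> show False
      by simp
  qed
  have big_event: "big \<in> events"
    unfolding big_def by (rule prob_many_large_le(1)) simp
  have marked_Union_event: "(\<Union>k\<in>{k. Q k}. marked k) \<in> events"
    using \<open>finite {k. Q k}\<close> marked_events by (intro sets.finite_UN) auto
  then have "prob {\<omega> \<in> space M. Max ({\<bar>Zsum X R m a \<gamma> n l k \<omega>\<bar> | k. Q k} \<union> {0}) / a n > \<epsilon>}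
      \<le> prob (big \<union> (\<Union>k\<in>{k. Q k}. marked k))"
    using incl big_event by (intro finite_measure_mono) auto
  also have "\<dots> \<le> prob big + prob (\<Union>k\<in>{k. Q k}. marked k)"
    using big_event marked_Union_event by (rule measure_Un_le)
  also have "\<dots> \<le> prob big + (\<Sum>k | Q k. prob (marked k))"
    using \<open>finite {k. Q k}\<close> marked_events by (intro add_left_mono finite_measure_subadditive_finite) auto
  also have "\<dots> \<le> (real (m n) * tail (c * a n)) ^ Suc l / fact (Suc l)
      + (\<Sum>k | Q k. (real (m n) * (tail (real n powr - \<gamma> * a n) * mark_prob n k)) ^ r / fact r)"
    unfolding big_def marked_def
    by (intro add_mono sum_mono prob_many_large_le(2) prob_many_large_marked_le(2) \<open>1 \<le> r\<close>) simp
  finally show ?thesis .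
qed

lemma scaled_tail_mark_prob_le:
  assumes "1 \<le> n" "0 \<le> \<gamma>"
    and scaled: "\<And>\<delta>. 0 < \<delta> \<Longrightarrow> \<delta> \<le> 1 \<Longrightarrow> real (m n) * tail (\<delta> * a n) \<le> \<Lambda> * \<delta> powr - \<beta>"
    and mark: "mark_prob n k \<le> C * real n powr - c0"
  shows "real (m n) * (tail (real n powr - \<gamma> * a n) * mark_prob n k) \<le> \<Lambda> * C * real n powr (\<gamma> * \<beta> - c0)"
proof -
  define \<delta> where "\<delta> = real n powr - \<gamma>"
  have "1 \<le> real n powr \<gamma>"
    using assms(1,2) by (intro ge_one_powr_ge_zero) auto
  then have "0 < \<delta>" "\<delta> \<le> 1"
    using \<open>1 \<le> n\<close> by (auto simp: \<delta>_def powr_minus_divide)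
  moreover have "\<delta> powr - \<beta> = real n powr (\<gamma> * \<beta>)"
    by (simp add: \<delta>_def powr_powr)
  ultimately have tail_le: "real (m n) * tail (\<delta> * a n) \<le> \<Lambda> * real n powr (\<gamma> * \<beta>)"
    using scaled[of \<delta>] by simp
  moreover have "0 \<le> real (m n) * tail (\<delta> * a n)"
    using tail_nonneg by simp
  ultimately have "real (m n) * tail (\<delta> * a n) * mark_prob n k
      \<le> \<Lambda> * real n powr (\<gamma> * \<beta>) * (C * real n powr - c0)"
    by (intro mult_mono[OF tail_le mark _ mark_prob_nonneg]) linarith
  also have "\<dots> = \<Lambda> * C * real n powr (\<gamma> * \<beta> - c0)"
    by (simp add: powr_diff powr_minus divide_inverse mult_ac)
  finally show ?thesis
    by (simp add: \<delta>_def mult_ac)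
qed

lemma prob_Max_abs_Zsum_gt_le_powr:
  fixes m :: "nat \<Rightarrow> nat" and a :: "nat \<Rightarrow> real" and Q :: "nat \<Rightarrow> bool"
  assumes "1 \<le> n" "0 < a n" "0 < c" "c \<le> 1" "1 \<le> r" "(real r - 1) * c \<le> \<epsilon>" "0 \<le> \<gamma>" "0 \<le> C"
    and scaled: "\<And>\<delta>. 0 < \<delta> \<Longrightarrow> \<delta> \<le> 1 \<Longrightarrow> real (m n) * tail (\<delta> * a n) \<le> \<Lambda> * \<delta> powr - \<beta>"
    and Q_le: "\<And>k. Q k \<Longrightarrow> k \<le> n"
    and marks: "\<And>k. Q k \<Longrightarrow> mark_prob n k \<le> C * real n powr - c0"
  shows "prob {\<omega> \<in> space M. Max ({\<bar>Zsum X R m a \<gamma> n l k \<omega>\<bar> | k. Q k} \<union> {0}) / a n > \<epsilon>}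
    \<le> (\<Lambda> * c powr - \<beta>) ^ Suc l / fact (Suc l)
      + real (n + 1) * ((\<Lambda> * C) ^ r / fact r) * real n powr - (real r * (c0 - \<gamma> * \<beta>))"
proof -
  define B where "B = \<Lambda> * C * real n powr (\<gamma> * \<beta> - c0)"
  have Q_sub: "{k. Q k} \<subseteq> {..n}"
    using Q_le by auto
  then have "finite {k. Q k}" "card {k. Q k} \<le> n + 1"
    using finite_subset card_mono[OF _ Q_sub] by fastforce+
  have "0 \<le> real (m n) * tail (1 * a n)"
    using tail_nonneg by simp
  also have "\<dots> \<le> \<Lambda>"
    using scaled[of 1] by simp
  finally have "0 \<le> B ^ r / fact r"
    using \<open>0 \<le> C\<close> by (simp add: B_def)
  have "(real (m n) * tail (c * a n)) ^ Suc l / fact (Suc l) \<le> (\<Lambda> * c powr - \<beta>) ^ Suc l / fact (Suc l)"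
    using scaled[of c] \<open>0 < c\<close> \<open>c \<le> 1\<close> tail_nonneg by (intro divide_right_mono power_mono) auto
  moreover have "(\<Sum>k | Q k. (real (m n) * (tail (real n powr - \<gamma> * a n) * mark_prob n k)) ^ r / fact r)
      \<le> (\<Sum>k | Q k. B ^ r / fact r)"
    using scaled_tail_mark_prob_le[where m = m and a = a, OF assms(1,7) scaled marks] tail_nonneg mark_prob_nonneg
    by (intro sum_mono divide_right_mono power_mono) (auto simp: B_def)
  moreover have "(\<Sum>k | Q k. B ^ r / fact r) \<le> real (n + 1) * (B ^ r / fact r)"
    using mult_right_mono[OF _ \<open>0 \<le> B ^ r / fact r\<close>, of "real (card {k. Q k})" "real (n + 1)"]
      \<open>card {k. Q k} \<le> n + 1\<close> by simp
  moreover have "B ^ r = (\<Lambda> * C) ^ r * real n powr - (real r * (c0 - \<gamma> * \<beta>))"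
    using \<open>1 \<le> n\<close> by (simp add: B_def power_mult_distrib powr_power right_diff_distrib mult_ac)
  ultimately show ?thesis
    using prob_Max_abs_Zsum_gt_le[where a = a and n = n and Q = Q and m = m and \<gamma> = \<gamma> and l = l,
      OF assms(2,3,5,6) \<open>finite {k. Q k}\<close>]
    by (simp add: mult_ac)
qed

end

theorem lemma3p8:
  fixes M :: "'a measure"
    and E :: "real set"
    and R :: "nat \<Rightarrow> nat \<Rightarrow> 'a \<Rightarrow> nat set"
    and X :: "nat \<Rightarrow> 'a \<Rightarrow> real"
    and L :: "real \<Rightarrow> real"
    and \<alpha> p c0 \<gamma> :: real
    and m :: "nat \<Rightarrow> nat"
    and a :: "nat \<Rightarrow> real"
  assumes M: "prob_space M"
    and E: "E \<subseteq> {0..1}" "finite ({0..1} - E)"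
    \<comment> \<open>R n j, j >= 1: i.i.d. copies of the random set R_n, contained a.s. in {0..n}/n\<close>
    and R_grid: "\<And>n j. j \<ge> 1 \<Longrightarrow> AE \<omega> in M. R n j \<omega> \<subseteq> {..n}"
    and R_indep: "\<And>n. prob_space.indep_vars M (\<lambda>_. set_space) (R n) {1..}"
    and R_ident: "\<And>n j. j \<ge> 1 \<Longrightarrow> distr M set_space (R n j) = distr M set_space (R n 1)"
    and c0: "c0 > 0"
    and R_small: "\<And>a' b'. {a'..b'} \<subseteq> E \<Longrightarrow> \<exists>C. \<forall>n\<ge>1. \<forall>k\<le>n. real k / real n \<in> {a'..b'} \<longrightarrow>
                   measure M {\<omega> \<in> space M. k \<in> R n 1 \<omega>} \<le> C * real n powr (- c0)"
    \<comment> \<open>X j, j >= 1: i.i.d., and the family X independent of the whole family R\<close>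
    and X_indep: "prob_space.indep_vars M (\<lambda>_. borel) X {1..}"
    and X_ident: "\<And>j. j \<ge> 1 \<Longrightarrow> distr M borel (X j) = distr M borel (X 1)"
    and XR_indep: "prob_space.indep_set M
        (sigma_sets (space M) (\<Union>j\<in>{1..}. {X j -` A \<inter> space M | A. A \<in> sets borel}))
        (sigma_sets (space M) (\<Union>n. \<Union>j\<in>{1..}. {R n j -` A \<inter> space M | A. A \<in> sets set_space}))"
    and alpha: "\<alpha> > 0"
    and tail: "\<And>x. x > 0 \<Longrightarrow> measure M {\<omega> \<in> space M. \<bar>X 1 \<omega>\<bar> > x} = x powr (- \<alpha>) * L x"
    and L: "slowly_varying L"
    and p: "0 < p" "p \<le> 1"
    and balance: "((\<lambda>x. measure M {\<omega> \<in> space M. X 1 \<omega> > x} /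
                        measure M {\<omega> \<in> space M. \<bar>X 1 \<omega>\<bar> > x}) \<longlongrightarrow> p) at_top"
    and m_mono: "mono m" and m_pos: "\<And>n. m n > 0" and m_lim: "filterlim m at_top sequentially"
    and a_n: "(\<lambda>n. real (m n) * measure M {\<omega> \<in> space M. X 1 \<omega> > a n}) \<longlonglongrightarrow> 1"
    and gamma: "0 < \<gamma>" "\<gamma> < c0 / \<alpha>"
  shows "\<forall>\<epsilon>>0. \<forall>a' b'. {a'..b'} \<subseteq> E \<longrightarrow>
    ((\<lambda>l. limsup (\<lambda>n. ereal (measure M {\<omega> \<in> space M.
         Max ({\<bar>Zsum X R m a \<gamma> n l k \<omega>\<bar> | k. k \<le> n \<and> real k / real n \<in> {a'..b'}} \<union> {0}) / a n > \<epsilon>})))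
      \<longlonglongrightarrow> 0)"
proof (intro allI impI)
  fix \<epsilon> a' b' :: real
  assume "0 < \<epsilon>" and "{a'..b'} \<subseteq> E"
  interpret iid_marked_sample M X R
    by (intro iid_marked_sample.intro iid_marked_sample_axioms.intro M X_indep X_ident R_indep R_ident XR_indep)
  obtain C0 where C0: "\<forall>n\<ge>1. \<forall>k\<le>n. real k / real n \<in> {a'..b'} \<longrightarrow> mark_prob n k \<le> C0 * real n powr - c0"
    using R_small[OF \<open>{a'..b'} \<subseteq> E\<close>] unfolding mark_prob_def by blast
  define C where "C = max C0 0"
  have marks: "mark_prob n k \<le> C * real n powr - c0"
    if "1 \<le> n" "k \<le> n" "real k / real n \<in> {a'..b'}" for n k
  proof -
    have "mark_prob n k \<le> C0 * real n powr - c0"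
      using C0 that by blast
    also have "\<dots> \<le> C * real n powr - c0"
      unfolding C_def by (intro mult_right_mono) auto
    finally show ?thesis .
  qed
  have "0 \<le> C"
    by (simp add: C_def)
  obtain \<beta> and r :: nat where "\<alpha> < \<beta>" "1 \<le> r" and r: "1 < real r * (c0 - \<gamma> * \<beta>)"
    using exists_exponent_and_multiplicity[OF alpha gamma] .
  define c where "c = min 1 (\<epsilon> / real r)"
  have c: "0 < c" "c \<le> 1" "(real r - 1) * c \<le> \<epsilon>"
    using \<open>0 < \<epsilon>\<close> \<open>1 \<le> r\<close> by (auto simp: c_def min_def field_simps)
  obtain K x0 where "0 < K" "0 < x0"
    and potter: "\<forall>x \<ge> x0. \<forall>\<delta>. 0 < \<delta> \<and> \<delta> \<le> 1 \<longrightarrow> tail (\<delta> * x) \<le> K * \<delta> powr - \<beta> * tail x"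
    using potter_bound[OF antimono_tail _ L _ \<open>\<alpha> < \<beta>\<close>] tail \<open>\<alpha> < \<beta>\<close> alpha by (auto simp: tail_def)
  have "\<forall>\<^sub>F n in sequentially. 0 < a n \<and>
      (\<forall>\<delta>. 0 < \<delta> \<and> \<delta> \<le> 1 \<longrightarrow> real (m n) * tail (\<delta> * a n) \<le> K * (4 / p) * \<delta> powr - \<beta>)"
    using normalizing_sequence[OF X_measurable[of 1] p(1) balance m_lim a_n] \<open>0 < K\<close> \<open>0 < x0\<close>
    by (intro eventually_potter_scaled_le[OF potter]) (auto simp: tail_def)
  then have "\<forall>\<^sub>F n in sequentially. measure M {\<omega> \<in> space M.
      Max ({\<bar>Zsum X R m a \<gamma> n l k \<omega>\<bar> | k. k \<le> n \<and> real k / real n \<in> {a'..b'}} \<union> {0}) / a n > \<epsilon>}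
    \<le> (K * (4 / p) * c powr - \<beta>) ^ Suc l / fact (Suc l)
      + real (n + 1) * ((K * (4 / p) * C) ^ r / fact r) * real n powr - (real r * (c0 - \<gamma> * \<beta>))"
    for l
    using eventually_ge_at_top[of 1]
  proof eventually_elim
    case (elim n)
    then show ?case
      using c \<open>1 \<le> r\<close> \<open>0 \<le> C\<close> gamma marks by (intro prob_Max_abs_Zsum_gt_le_powr) auto
  qed
  then show "(\<lambda>l. limsup (\<lambda>n. ereal (measure M {\<omega> \<in> space M.
      Max ({\<bar>Zsum X R m a \<gamma> n l k \<omega>\<bar> | k. k \<le> n \<and> real k / real n \<in> {a'..b'}} \<union> {0}) / a n > \<epsilon>})))
    \<longlonglongrightarrow> 0"
    using power_div_fact_Suc_tendsto_0 tendsto_linear_times_powr_0[OF r]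
    by (rule limsup_tendsto_0_of_eventually_le) simp
qed

end
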